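(* Every weakly sparse class of finite graphs with bounded $\mathrm{mw}_3$ has bounded star chromatic number.
   Context: A class of graphs is weakly sparse if there exists $t$ such that no graph in the class contains $K_{t,t}$ as a (not necessarily induced) subgraph. The star chromatic number is the minimum number of colors in a proper vertex coloring in which every two color classes induce a star forest. Merge-width of a graph $G=(V,E)$: with $(V)_2=\{(u,v)\in V^2:u\ne v\}$ and $AB=\{(u,v)\in A\times B:u\neq v\}$, a merge-sequence is $\Sigma=((\mathcal P_1,R_1),\dots,(\mathcal P_m,R_m))$ with partitions $\mathcal P_i$ of $V$, $\mathcal P_{i-1}$ refining $\mathcal P_i$, $\mathcal P_1$ singletons, $\mathcal P_m=\{V\}$; $R_1\subseteq\dots\subseteq R_m=(V)_2$; for all $i$ and $P,Q\in\mathcal P_i$, either $PQ\setminus R_i\subseteq E$ or $(PQ\setminus R_i)\cap E=\emptyset$. $\mathrm{width}_r(\Sigma)=\max_{2\le i\le m}\max_v|\{P\in\mathcal P_{i-1}:\mathrm{dist}_{R_i}(v,P)\le r\}|$ (distance in the undirected graph $(V,R_i)$); $\mathrm{mw}_r(G)=\min_\Sigma\mathrm{width}_r(\Sigma)$. *)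

theory Defs
  imports Main "HOL-Library.Disjoint_Sets"
begin

definition offdiag :: "'a set \<Rightarrow> 'a set \<Rightarrow> ('a \<times> 'a) set" where
  "offdiag A B = {(u, v). u \<in> A \<and> v \<in> B \<and> u \<noteq> v}"

definition fin_graph :: "'a set \<times> ('a \<times> 'a) set \<Rightarrow> bool" where
  "fin_graph G \<longleftrightarrow> finite (fst G) \<and> snd G \<subseteq> offdiag (fst G) (fst G) \<and> sym (snd G)"

definition contains_Ktt :: "'a set \<times> ('a \<times> 'a) set \<Rightarrow> nat \<Rightarrow> bool" where
  "contains_Ktt G t \<longleftrightarrow> (\<exists>A B. A \<subseteq> fst G \<and> B \<subseteq> fst G \<and> A \<inter> B = {} \<and>
      card A = t \<and> card B = t \<and> finite A \<and> finite B \<and> (\<forall>a\<in>A. \<forall>b\<in>B. (a, b) \<in> snd G))"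

definition weakly_sparse :: "('a set \<times> ('a \<times> 'a) set) set \<Rightarrow> bool" where
  "weakly_sparse \<C> \<longleftrightarrow> (\<exists>t. \<forall>G\<in>\<C>. \<not> contains_Ktt G t)"

text \<open>A star forest: every connected component is a star, i.e. for every vertex v
there is a centre c such that every edge in the component of v is incident with c.\<close>
definition star_forest :: "('a \<times> 'a) set \<Rightarrow> bool" where
  "star_forest F \<longleftrightarrow> (\<forall>v. \<exists>c. \<forall>x y. (x, y) \<in> F \<and> (v, x) \<in> F\<^sup>* \<longrightarrow> x = c \<or> y = c)"

definition star_coloring :: "'a set \<times> ('a \<times> 'a) set \<Rightarrow> nat \<Rightarrow> ('a \<Rightarrow> nat) \<Rightarrow> bool" where
  "star_coloring G k col \<longleftrightarrow>
     (\<forall>v\<in>fst G. col v < k) \<and>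
     (\<forall>(u, v)\<in>snd G. col u \<noteq> col v) \<and>
     (\<forall>i j. i \<noteq> j \<longrightarrow>
        (let S = {v \<in> fst G. col v = i \<or> col v = j} in star_forest (snd G \<inter> (S \<times> S))))"

definition star_chromatic_number :: "'a set \<times> ('a \<times> 'a) set \<Rightarrow> nat" where
  "star_chromatic_number G = (LEAST k. \<exists>col. star_coloring G k col)"

definition merge_sequence ::
  "'a set \<times> ('a \<times> 'a) set \<Rightarrow> nat \<Rightarrow> (nat \<Rightarrow> 'a set set) \<Rightarrow> (nat \<Rightarrow> ('a \<times> 'a) set) \<Rightarrow> bool" where
  "merge_sequence G m P R \<longleftrightarrow>
     1 \<le> m \<and>
     (\<forall>i\<in>{1..m}. partition_on (fst G) (P i)) \<and>
     (\<forall>i\<in>{2..m}. \<forall>X\<in>P (i - 1). \<exists>Y\<in>P i. X \<subseteq> Y) \<and>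
     P 1 = {{v} | v. v \<in> fst G} \<and>
     P m = {fst G} \<and>
     (\<forall>i\<in>{2..m}. R (i - 1) \<subseteq> R i) \<and>
     R m = offdiag (fst G) (fst G) \<and>
     (\<forall>i\<in>{1..m}. \<forall>X\<in>P i. \<forall>Y\<in>P i.
        offdiag X Y - R i \<subseteq> snd G \<or> (offdiag X Y - R i) \<inter> snd G = {})"

definition dist_le :: "('a \<times> 'a) set \<Rightarrow> nat \<Rightarrow> 'a \<Rightarrow> 'a set \<Rightarrow> bool" where
  "dist_le R r v X \<longleftrightarrow> (\<exists>u\<in>X. \<exists>k\<le>r. (v, u) \<in> (R \<union> R\<inverse>) ^^ k)"

definition width_le ::
  "'a set \<times> ('a \<times> 'a) set \<Rightarrow> nat \<Rightarrow> (nat \<Rightarrow> 'a set set) \<Rightarrow> (nat \<Rightarrow> ('a \<times> 'a) set) \<Rightarrow> nat \<Rightarrow> nat \<Rightarrow> bool" where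
  "width_le G m P R r k \<longleftrightarrow>
     (\<forall>i\<in>{2..m}. \<forall>v\<in>fst G. card {X \<in> P (i - 1). dist_le (R i) r v X} \<le> k)"

text \<open>r-merge-width; the empty graph (which has no merge sequence since P_1 = {} \<noteq> {V})
is given merge-width 0 by convention.\<close>
definition merge_width :: "nat \<Rightarrow> 'a set \<times> ('a \<times> 'a) set \<Rightarrow> nat" where
  "merge_width r G = (if fst G = {} then 0 else
     (LEAST k. \<exists>m P R. merge_sequence G m P R \<and> width_le G m P R r k))"

end

(*
  Let G be K_{t,t}-free with a merge sequence of radius-3 width k. For a vertex set S,
  take the first step i at which some part X of P_i contains t vertices of S. Every part
  of P_{i-1} then meets S in fewer than t vertices, so each radius-3 ball of (V, R_i)
  contains at most k(t-1) vertices of S. Fix t vertices X' of X inside S and x in X'.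
  A neighbour w of x that is R_i-adjacent to no vertex of X' is, by the homogeneity of the
  pair formed by X and the part of w, adjacent to all of X'; so there are fewer than t such
  w, and x has few neighbours in S. Thus G is d-degenerate with d depending on k and t.
  An acyclic orientation D of out-degree at most d exists, and the same argument, applied to
  the vertices that share an in-neighbour with x, shows that the fraternal graph of D is
  degenerate too. Greedily colouring the fraternal graph and D \<union> D O D and taking the product
  colouring gives a proper colouring without bicoloured paths on four vertices, i.e. a star
  colouring with a number of colours bounded in terms of k and t.
*)

theory Submission
  imports Defs
begin

lemma card_UN_le_mult:
  assumes "finite I" "card I \<le> a" "\<And>i. i \<in> I \<Longrightarrow> card (A i) \<le> b"
  shows "card (\<Union>i\<in>I. A i) \<le> a * b"
proof -
  have "card (\<Union>i\<in>I. A i) \<le> (\<Sum>i\<in>I. card (A i))" using card_UN_le[OF assms(1)] .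
  also have "\<dots> \<le> card I * b" using sum_bounded_above[of I "\<lambda>i. card (A i)" b] assms(3) by simp
  also have "\<dots> \<le> a * b" using assms(2) by simp
  finally show ?thesis .
qed

lemma ex_le_notin_if_card_le:
  assumes "finite F" "card F \<le> (d :: nat)"
  obtains c where "c \<le> d" "c \<notin> F"
proof -
  have "card F < card {0..d}" using assms(2) by simp
  then have "\<not> {0..d} \<subseteq> F" using card_mono[OF assms(1)] by (meson not_le)
  then obtain c where "c \<in> {0..d}" "c \<notin> F" by blast
  then show ?thesis using that by simp
qed

lemma inj_on_fun_upd_Suc_Max:
  fixes f :: "'a \<Rightarrow> nat"
  assumes "finite A" "inj_on f A" "x \<notin> A"
  shows "inj_on (f(x := Suc (Max (f ` A)))) (insert x A)"
proof -
  have "f y \<le> Max (f ` A)" if "y \<in> A" for y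
    using assms(1) that by (intro Max_ge) auto
  then have "f y \<noteq> Suc (Max (f ` A))" if "y \<in> A" for y
    using that by (metis not_less_eq_eq order_refl)
  then show ?thesis using assms(2,3) unfolding inj_on_def by (metis fun_upd_apply insert_iff)
qed

lemma fin_graph_edgeD:
  assumes "fin_graph (V, E)" "(a, b) \<in> E"
  shows "a \<in> V" "b \<in> V" "a \<noteq> b"
  using assms unfolding fin_graph_def offdiag_def by auto

lemma contains_KttI:
  assumes "fin_graph G" "A \<subseteq> fst G" "B \<subseteq> fst G" "t \<le> card A" "t \<le> card B"
    and "\<forall>a\<in>A. \<forall>b\<in>B. (a, b) \<in> snd G"
  shows "contains_Ktt G t"
proof -
  obtain A' where A': "A' \<subseteq> A" "card A' = t" "finite A'"
    using obtain_subset_with_card_n[OF assms(4)] by metis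
  obtain B' where B': "B' \<subseteq> B" "card B' = t" "finite B'"
    using obtain_subset_with_card_n[OF assms(5)] by metis
  have "A' \<inter> B' = {}"
  proof (rule ccontr)
    assume "A' \<inter> B' \<noteq> {}"
    then obtain a where "a \<in> A" "a \<in> B" using A'(1) B'(1) by blast
    then have "(a, a) \<in> snd G" using assms(6) by blast
    then show False using assms(1) unfolding fin_graph_def offdiag_def by blast
  qed
  moreover have "A' \<subseteq> fst G" "B' \<subseteq> fst G" "\<forall>a\<in>A'. \<forall>b\<in>B'. (a, b) \<in> snd G"
    using assms(2,3,6) A'(1) B'(1) by blast+
  ultimately show ?thesis
    unfolding contains_Ktt_def using A' B' by blast
qed

lemma contains_Ktt_mono:
  assumes "fin_graph G" "contains_Ktt G t'" "t \<le> t'"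
  shows "contains_Ktt G t"
proof -
  obtain A B where "A \<subseteq> fst G" "B \<subseteq> fst G" "card A = t'" "card B = t'"
    "\<forall>a\<in>A. \<forall>b\<in>B. (a, b) \<in> snd G"
    using assms(2) unfolding contains_Ktt_def by blast
  then show ?thesis using contains_KttI[OF assms(1)] assms(3) by simp
qed

definition nbhd :: "('a \<times> 'a) set \<Rightarrow> nat \<Rightarrow> 'a \<Rightarrow> 'a set" where
  "nbhd R r v = {u. dist_le R r v {u}}"

lemma dist_le_iff_nbhd: "dist_le R r v X \<longleftrightarrow> nbhd R r v \<inter> X \<noteq> {}"
  unfolding nbhd_def dist_le_def by auto

lemma nbhd_refl: "v \<in> nbhd R r v"
  unfolding nbhd_def dist_le_def by (auto intro: exI[of _ 0])

lemma nbhd_mono: "r \<le> r' \<Longrightarrow> nbhd R r v \<subseteq> nbhd R r' v"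
  unfolding nbhd_def dist_le_def by (auto intro: le_trans)

lemma nbhd_step:
  assumes "u \<in> nbhd R r v" "(u, w) \<in> R \<or> (w, u) \<in> R"
  shows "w \<in> nbhd R (Suc r) v"
proof -
  obtain j where "j \<le> r" "(v, u) \<in> (R \<union> R\<inverse>) ^^ j"
    using assms(1) unfolding nbhd_def dist_le_def by blast
  then have "Suc j \<le> Suc r" "(v, w) \<in> (R \<union> R\<inverse>) ^^ Suc j"
    using assms(2) by auto
  then show ?thesis unfolding nbhd_def dist_le_def by blast
qed

section \<open>Degeneracy, acyclic orientations and greedy colourings\<close>

definition degenerate :: "'a set \<Rightarrow> ('a \<times> 'a) set \<Rightarrow> nat \<Rightarrow> bool" where
  "degenerate V H d \<longleftrightarrow>
     (\<forall>S\<subseteq>V. S \<noteq> {} \<longrightarrow> (\<exists>x\<in>S. card {y\<in>S. y \<noteq> x \<and> ((x, y) \<in> H \<or> (y, x) \<in> H)} \<le> d))"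

definition proper_on :: "'a set \<Rightarrow> ('a \<times> 'a) set \<Rightarrow> ('a \<Rightarrow> nat) \<Rightarrow> bool" where
  "proper_on V H col \<longleftrightarrow> (\<forall>a\<in>V. \<forall>b\<in>V. (a, b) \<in> H \<longrightarrow> a \<noteq> b \<longrightarrow> col a \<noteq> col b)"

definition fraternal :: "('a \<times> 'a) set \<Rightarrow> ('a \<times> 'a) set" where
  "fraternal D = {(a, b). \<exists>w. (w, a) \<in> D \<and> (w, b) \<in> D}"

lemma degenerate_subset: "degenerate V H d \<Longrightarrow> A \<subseteq> V \<Longrightarrow> degenerate A H d"
  unfolding degenerate_def by blast

lemma proper_on_fun_upd:
  assumes "proper_on (A - {x}) H col"
    and "\<forall>y\<in>A. y \<noteq> x \<and> ((x, y) \<in> H \<or> (y, x) \<in> H) \<longrightarrow> col y \<noteq> c"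
  shows "proper_on A H (col(x := c))"
  using assms unfolding proper_on_def by (metis DiffI fun_upd_apply singletonD)

lemma degenerate_greedy_coloring:
  assumes "finite V" "degenerate V H d"
  obtains col where "\<forall>v\<in>V. col v \<le> d" "proper_on V H col"
proof -
  have "\<exists>col. (\<forall>v\<in>V. col v \<le> d) \<and> proper_on V H col"
    using assms
  proof (induction V rule: finite_remove_induct)
    case empty
    show ?case by (simp add: proper_on_def)
  next
    case (remove A)
    define N where "N x = {y\<in>A. y \<noteq> x \<and> ((x, y) \<in> H \<or> (y, x) \<in> H)}" for x
    obtain x where x: "x \<in> A" "card (N x) \<le> d"
      using remove.prems remove.hyps(2) unfolding degenerate_def N_def by blast
    obtain col where col: "\<forall>v\<in>A - {x}. col v \<le> d" "proper_on (A - {x}) H col"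
      using remove.IH[OF x(1) degenerate_subset[OF remove.prems]] by blast
    have "finite (N x)" using remove.hyps(1) unfolding N_def by simp
    then have "card (col ` N x) \<le> d" using card_image_le[of "N x" col] x(2) by simp
    then obtain c where c: "c \<le> d" "c \<notin> col ` N x"
      by (rule ex_le_notin_if_card_le[OF finite_imageI[OF \<open>finite (N x)\<close>]])
    have "proper_on A H (col(x := c))"
      using c(2) unfolding N_def by (intro proper_on_fun_upd[OF col(2)]) blast
    moreover have "\<forall>v\<in>A. (col(x := c)) v \<le> d" using col(1) c(1) by simp
    ultimately show ?case by blast
  qed
  then show ?thesis using that by blast
qed

lemma degenerate_ranking:
  assumes "finite V" "degenerate V H d"
  obtains rk :: "'a \<Rightarrow> nat" where "inj_on rk V"
    "\<And>x. x \<in> V \<Longrightarrow> card {y\<in>V. y \<noteq> x \<and> ((x, y) \<in> H \<or> (y, x) \<in> H) \<and> rk y < rk x} \<le> d"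
proof -
  define earlier where
    "earlier B rk z = {y\<in>B. y \<noteq> z \<and> ((z, y) \<in> H \<or> (y, z) \<in> H) \<and> rk y < (rk z :: nat)}" for B rk z
  have "\<exists>rk. inj_on rk V \<and> (\<forall>z\<in>V. card (earlier V rk z) \<le> d)"
    using assms
  proof (induction V rule: finite_remove_induct)
    case empty
    show ?case by simp
  next
    case (remove A)
    obtain x where x: "x \<in> A" "card {y\<in>A. y \<noteq> x \<and> ((x, y) \<in> H \<or> (y, x) \<in> H)} \<le> d"
      using remove.prems remove.hyps(2) unfolding degenerate_def by blast
    obtain rk where rk: "inj_on rk (A - {x})" "\<forall>z\<in>A - {x}. card (earlier (A - {x}) rk z) \<le> d"
      using remove.IH[OF x(1) degenerate_subset[OF remove.prems]] by blast
    define rk' where "rk' = rk(x := Suc (Max (rk ` (A - {x}))))"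
    have "inj_on rk' A"
      using inj_on_fun_upd_Suc_Max[OF _ rk(1), of x] remove.hyps(1) insert_Diff[OF x(1)]
      unfolding rk'_def by simp
    moreover have "card (earlier A rk' z) \<le> d" if "z \<in> A" for z
    proof (cases "z = x")
      case True
      have "earlier A rk' z \<subseteq> {y\<in>A. y \<noteq> x \<and> ((x, y) \<in> H \<or> (y, x) \<in> H)}"
        unfolding earlier_def True by blast
      moreover have "finite {y\<in>A. y \<noteq> x \<and> ((x, y) \<in> H \<or> (y, x) \<in> H)}"
        using remove.hyps(1) by simp
      ultimately show ?thesis using card_mono x(2) by (meson le_trans)
    next
      case False
      have "rk z \<le> Max (rk ` (A - {x}))" using remove.hyps(1) that False by (intro Max_ge) auto
      then have "earlier A rk' z = earlier (A - {x}) rk z"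
        using False unfolding earlier_def rk'_def by auto
      then show ?thesis using rk(2) False that by simp
    qed
    ultimately show ?case by blast
  qed
  then obtain rk where "inj_on rk V" "\<forall>z\<in>V. card (earlier V rk z) \<le> d"
    by (elim exE conjE)
  then show ?thesis using that unfolding earlier_def by simp
qed

lemma degenerate_orientation:
  assumes "finite V" "degenerate V H d"
  obtains D and rk :: "'a \<Rightarrow> nat" where
    "D \<subseteq> (H \<union> H\<inverse>) \<inter> (V \<times> V)"
    "\<And>a b. a \<in> V \<Longrightarrow> b \<in> V \<Longrightarrow> (a, b) \<in> H \<Longrightarrow> a \<noteq> b \<Longrightarrow> (a, b) \<in> D \<or> (b, a) \<in> D"
    "\<And>a b. (a, b) \<in> D \<Longrightarrow> rk b < rk a"
    "\<And>w. card {y. (w, y) \<in> D} \<le> d"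
proof -
  obtain rk :: "'a \<Rightarrow> nat" where rk: "inj_on rk V"
    "\<And>x. x \<in> V \<Longrightarrow> card {y\<in>V. y \<noteq> x \<and> ((x, y) \<in> H \<or> (y, x) \<in> H) \<and> rk y < rk x} \<le> d"
    by (rule degenerate_ranking[OF assms]) blast
  define D where "D = {(a, b). a \<in> V \<and> b \<in> V \<and> a \<noteq> b \<and> ((a, b) \<in> H \<or> (b, a) \<in> H) \<and> rk b < rk a}"
  have "D \<subseteq> (H \<union> H\<inverse>) \<inter> (V \<times> V)" unfolding D_def by blast
  moreover have "(a, b) \<in> D \<or> (b, a) \<in> D" if "a \<in> V" "b \<in> V" "(a, b) \<in> H" "a \<noteq> b" for a b
    using that inj_onD[OF rk(1)] unfolding D_def by (cases "rk a" "rk b" rule: linorder_cases) auto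
  moreover have "rk b < rk a" if "(a, b) \<in> D" for a b using that unfolding D_def by simp
  moreover have "card {y. (w, y) \<in> D} \<le> d" for w
  proof (cases "w \<in> V")
    case True
    have "{y. (w, y) \<in> D} = {y\<in>V. y \<noteq> w \<and> ((w, y) \<in> H \<or> (y, w) \<in> H) \<and> rk y < rk w}"
      unfolding D_def using True by blast
    then show ?thesis using rk(2)[OF True] by simp
  next
    case False
    then show ?thesis unfolding D_def by simp
  qed
  ultimately show ?thesis by (rule that)
qed

lemma degenerate_if_ranked:
  assumes "finite V" "\<And>a b. (a, b) \<in> K \<Longrightarrow> rk b < (rk a :: nat)"
    and "\<And>w. finite {y. (w, y) \<in> K}" "\<And>w. card {y. (w, y) \<in> K} \<le> q"
  shows "degenerate V K q"
  unfolding degenerate_def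
proof (intro allI impI)
  fix S assume S: "S \<subseteq> V" "S \<noteq> {}"
  then have "finite S" using assms(1) finite_subset by blast
  then have "Max (rk ` S) \<in> rk ` S" using S(2) by (intro Max_in) auto
  then obtain x where x: "x \<in> S" "rk x = Max (rk ` S)" by auto
  have "\<forall>y\<in>S. rk y \<le> rk x" using x(2) \<open>finite S\<close> by simp
  then have "{y\<in>S. y \<noteq> x \<and> ((x, y) \<in> K \<or> (y, x) \<in> K)} \<subseteq> {y. (x, y) \<in> K}"
    using assms(2) leD by blast
  then have "card {y\<in>S. y \<noteq> x \<and> ((x, y) \<in> K \<or> (y, x) \<in> K)} \<le> q"
    using card_mono[OF assms(3)] assms(4) le_trans by blast
  then show "\<exists>x\<in>S. card {y\<in>S. y \<noteq> x \<and> ((x, y) \<in> K \<or> (y, x) \<in> K)} \<le> q"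
    using x(1) by blast
qed

lemma degenerate_Un_relcomp:
  assumes "finite V" "\<And>a b. (a, b) \<in> D \<Longrightarrow> rk b < (rk a :: nat)"
    and "\<And>w. finite {y. (w, y) \<in> D}" "\<And>w. card {y. (w, y) \<in> D} \<le> d"
  shows "degenerate V (D \<union> D O D) (d + d * d)"
proof (rule degenerate_if_ranked[OF assms(1)])
  show "rk b < rk a" if "(a, b) \<in> D \<union> D O D" for a b
    using that assms(2) less_trans by blast
  fix w
  have out: "{y. (w, y) \<in> D \<union> D O D} = {y. (w, y) \<in> D} \<union> (\<Union>z\<in>{y. (w, y) \<in> D}. {y. (z, y) \<in> D})"
    by blast
  then show "finite {y. (w, y) \<in> D \<union> D O D}" using assms(3) by simp
  have "card (\<Union>z\<in>{y. (w, y) \<in> D}. {y. (z, y) \<in> D}) \<le> d * d"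
    using assms(3,4) by (intro card_UN_le_mult) auto
  then show "card {y. (w, y) \<in> D \<union> D O D} \<le> d + d * d"
    unfolding out using le_trans[OF card_Un_le add_le_mono[OF assms(4)]] by blast
qed

lemma fraternal_witnesses:
  assumes "finite N" "N \<subseteq> {u. (x, u) \<in> fraternal D}"
    and "\<And>w. finite {y. (w, y) \<in> D}" "\<And>w. card {y. (w, y) \<in> D} \<le> d"
  obtains W f where "W \<subseteq> {w. (w, x) \<in> D}" "inj_on f W" "f ` W \<subseteq> N"
    "\<And>w. w \<in> W \<Longrightarrow> (w, f w) \<in> D" "card N \<le> card W * d"
proof -
  define wit where "wit u = (SOME w. (w, x) \<in> D \<and> (w, u) \<in> D)" for u
  have wit: "(wit u, x) \<in> D \<and> (wit u, u) \<in> D" if "u \<in> N" for u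
    unfolding wit_def by (rule someI_ex) (use that assms(2) in \<open>auto simp: fraternal_def\<close>)
  define W where "W = wit ` N"
  define f where "f = inv_into N wit"
  have "W \<subseteq> {w. (w, x) \<in> D}" unfolding W_def using wit by blast
  moreover have "inj_on f W" unfolding f_def W_def by (rule inj_on_inv_into) simp
  moreover have "f ` W \<subseteq> N" unfolding f_def W_def by (auto intro: inv_into_into)
  moreover have "(w, f w) \<in> D" if "w \<in> W" for w
  proof -
    have "f w \<in> N" "wit (f w) = w"
      using that unfolding f_def W_def by (auto intro: inv_into_into f_inv_into_f)
    then show ?thesis using wit by metis
  qed
  moreover have "card N \<le> card W * d"
  proof -
    have "N \<subseteq> (\<Union>w\<in>W. {y. (w, y) \<in> D})" unfolding W_def using wit by blast
    then have "card N \<le> card (\<Union>w\<in>W. {y. (w, y) \<in> D})"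
      using assms(1,3) unfolding W_def by (intro card_mono) auto
    also have "\<dots> \<le> card W * d"
      using assms(1,4) unfolding W_def by (intro card_UN_le_mult) auto
    finally show ?thesis .
  qed
  ultimately show ?thesis using that by blast
qed

lemma proper_on_product_coloring:
  assumes "proper_on V H1 c1" "proper_on V H2 c2" "\<forall>v\<in>V. c2 v < n"
  shows "proper_on V (H1 \<union> H2) (\<lambda>v. c1 v * n + c2 v)"
  unfolding proper_on_def
proof (intro ballI impI)
  fix a b assume ab: "a \<in> V" "b \<in> V" "(a, b) \<in> H1 \<union> H2" "a \<noteq> b"
  show "c1 a * n + c2 a \<noteq> c1 b * n + c2 b"
  proof
    assume eq: "c1 a * n + c2 a = c1 b * n + c2 b"
    have "(c1 x * n + c2 x) div n = c1 x" "(c1 x * n + c2 x) mod n = c2 x" if "x \<in> V" for x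
      using assms(3) that by auto
    then have "c1 a = c1 b" "c2 a = c2 b" using eq ab(1,2) by metis+
    then show False using assms(1,2) ab unfolding proper_on_def by blast
  qed
qed

section \<open>Star colourings\<close>

lemma star_forest_if_no_P4:
  assumes sym: "sym F"
    and no_P4: "\<And>a b c d. (a, b) \<in> F \<Longrightarrow> (b, c) \<in> F \<Longrightarrow> (c, d) \<in> F \<Longrightarrow> a \<noteq> c \<Longrightarrow> b \<noteq> d \<Longrightarrow> False"
  shows "star_forest F"
  unfolding star_forest_def
proof
  fix v
  have "\<exists>c. (c = v \<or> (c, v) \<in> F) \<and> (\<forall>x y. (c, x) \<in> F \<longrightarrow> (x, y) \<in> F \<longrightarrow> y = c)"
  proof (cases "\<forall>x y. (v, x) \<in> F \<longrightarrow> (x, y) \<in> F \<longrightarrow> y = v")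
    case True
    then show ?thesis by blast
  next
    case False
    then obtain x y where xy: "(v, x) \<in> F" "(x, y) \<in> F" "y \<noteq> v" by blast
    have "y' = x" if "(x, x') \<in> F" "(x', y') \<in> F" for x' y'
    proof (rule ccontr)
      assume "y' \<noteq> x"
      show False
      proof (cases "x' = v")
        case True
        then have "(y', v) \<in> F" using that(2) sym by (auto dest: symD)
        then show False using no_P4[OF _ xy(1,2)] \<open>y' \<noteq> x\<close> xy(3) by blast
      next
        case False
        then show False using no_P4[OF xy(1) that] \<open>y' \<noteq> x\<close> by blast
      qed
    qed
    moreover have "(x, v) \<in> F" using xy(1) sym by (auto dest: symD)
    ultimately show ?thesis by blast
  qed
  then obtain c where c: "c = v \<or> (c, v) \<in> F" "\<And>x y. (c, x) \<in> F \<Longrightarrow> (x, y) \<in> F \<Longrightarrow> y = c"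
    by blast
  define N where "N = insert c (F `` {c})"
  have closed: "y \<in> N" if "x \<in> N" "(x, y) \<in> F" for x y
    using that c(2) unfolding N_def by blast
  have reachable: "x \<in> N" if "(v, x) \<in> F\<^sup>*" for x
    using that
  proof (induction rule: rtrancl_induct)
    case base
    show ?case using c(1) unfolding N_def by blast
  next
    case (step y z)
    then show ?case using closed by blast
  qed
  show "\<exists>c. \<forall>x y. (x, y) \<in> F \<and> (v, x) \<in> F\<^sup>* \<longrightarrow> x = c \<or> y = c"
    using reachable c(2) unfolding N_def by blast
qed

lemma star_coloring_if_no_bicoloured_P4:
  assumes graph: "fin_graph (V, E)" and "\<forall>v\<in>V. col v < k" and proper: "proper_on V E col"
    and no_P4: "\<And>a b c d. (a, b) \<in> E \<Longrightarrow> (b, c) \<in> E \<Longrightarrow> (c, d) \<in> E \<Longrightarrow> a \<noteq> c \<Longrightarrow> b \<noteq> d \<Longrightarrow>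
      col a = col c \<Longrightarrow> col b = col d \<Longrightarrow> False"
  shows "star_coloring (V, E) k col"
proof -
  have edge: "col a \<noteq> col b" if "(a, b) \<in> E" for a b
    using that proper fin_graph_edgeD[OF graph that] unfolding proper_on_def by blast
  have "star_forest (E \<inter> (S \<times> S))" if "S = {v \<in> V. col v = i \<or> col v = j}" for S i j
  proof (rule star_forest_if_no_P4)
    show "sym (E \<inter> (S \<times> S))" using graph unfolding fin_graph_def sym_def by auto
  next
    fix a b c d
    assume path: "(a, b) \<in> E \<inter> (S \<times> S)" "(b, c) \<in> E \<inter> (S \<times> S)" "(c, d) \<in> E \<inter> (S \<times> S)"
      and "a \<noteq> c" "b \<noteq> d"
    have "col a \<noteq> col b" "col b \<noteq> col c" "col c \<noteq> col d" using path edge by blast+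
    moreover have "col a \<in> {i, j}" "col b \<in> {i, j}" "col c \<in> {i, j}" "col d \<in> {i, j}"
      using path \<open>S = _\<close> by blast+
    ultimately have "col a = col c" "col b = col d" by auto
    then show False using no_P4 path \<open>a \<noteq> c\<close> \<open>b \<noteq> d\<close> by blast
  qed
  then show ?thesis
    unfolding star_coloring_def Let_def using assms(2) edge by auto
qed

lemma star_coloring_if_proper_on_orientation_closure:
  assumes graph: "fin_graph (V, E)" and "\<forall>v\<in>V. col v < k"
    and orient: "D \<subseteq> E" "\<And>a b. (a, b) \<in> E \<Longrightarrow> (a, b) \<in> D \<or> (b, a) \<in> D"
    and proper: "proper_on V (D \<union> D O D \<union> fraternal D) col"
  shows "star_coloring (V, E) k col"
proof -
  have sep: "col a \<noteq> col b"
    if "(a, b) \<in> D \<union> D O D \<union> fraternal D \<or> (b, a) \<in> D \<union> D O D \<union> fraternal D"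
      "a \<in> V" "b \<in> V" "a \<noteq> b" for a b
    using that proper unfolding proper_on_def by metis
  show ?thesis
  proof (rule star_coloring_if_no_bicoloured_P4[OF graph assms(2)])
    show "proper_on V E col"
      unfolding proper_on_def using orient(2) sep by blast
  next
    fix a b c d
    assume E: "(a, b) \<in> E" "(b, c) \<in> E" "(c, d) \<in> E" and "a \<noteq> c" "b \<noteq> d"
      and "col a = col c" "col b = col d"
    then have ac: "(a, c) \<notin> D O D \<union> fraternal D \<and> (c, a) \<notin> D O D \<union> fraternal D"
      and bd: "(b, d) \<notin> D O D \<union> fraternal D \<and> (d, b) \<notin> D O D \<union> fraternal D"
      using sep fin_graph_edgeD[OF graph] by blast+
    \<comment> \<open>Otherwise \<open>a\<close> and \<open>c\<close> would be joined in \<open>D O D\<close> or be fraternal;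
      likewise for \<open>b\<close> and \<open>d\<close> below.\<close>
    have "(c, b) \<in> D"
      using orient(2)[OF E(1)] orient(2)[OF E(2)] ac unfolding fraternal_def by blast
    then show False
      using orient(2)[OF E(3)] bd unfolding fraternal_def by blast
  qed
qed

lemma star_chromatic_number_le: "star_coloring G k col \<Longrightarrow> star_chromatic_number G \<le> k"
  unfolding star_chromatic_number_def by (rule Least_le) blast

section \<open>Merge sequences of graphs without large complete bipartite subgraphs\<close>

lemma two_step_merge_sequence:
  assumes "V \<noteq> {}"
  shows "merge_sequence (V, E) 2 (\<lambda>i. if i = 1 then (\<lambda>v. {v}) ` V else {V})
           (\<lambda>i. if i = 1 then {} else offdiag V V)"
    (is "merge_sequence _ _ ?P ?R")
  unfolding merge_sequence_def fst_conv snd_conv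
proof (intro conjI)
  show "\<forall>i\<in>{1..2}. partition_on V (?P i)"
    using partition_on_singletons partition_on_space[OF assms] by simp
  show "\<forall>i\<in>{2..2}. \<forall>X\<in>?P (i - 1). \<exists>Y\<in>?P i. X \<subseteq> Y" by auto
  show "?P 1 = {{v} | v. v \<in> V}" by auto
  show "\<forall>i\<in>{1..2}. \<forall>X\<in>?P i. \<forall>Y\<in>?P i. offdiag X Y - ?R i \<subseteq> E \<or> (offdiag X Y - ?R i) \<inter> E = {}"
  proof (intro ballI)
    fix i :: nat and X Y assume i: "i \<in> {1..2}" and "X \<in> ?P i" "Y \<in> ?P i"
    show "offdiag X Y - ?R i \<subseteq> E \<or> (offdiag X Y - ?R i) \<inter> E = {}"
    proof (cases "i = 1")
      case True
      then obtain a b where "X = {a}" "Y = {b}" using \<open>X \<in> ?P i\<close> \<open>Y \<in> ?P i\<close> by auto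
      then show ?thesis unfolding offdiag_def by (cases "(a, b) \<in> E") auto
    next
      case False
      then show ?thesis using i \<open>X \<in> ?P i\<close> \<open>Y \<in> ?P i\<close> by simp
    qed
  qed
qed simp_all

lemma merge_width_witness:
  assumes "finite V" "V \<noteq> {}"
  obtains m P R where "merge_sequence (V, E) m P R" "width_le (V, E) m P R r (merge_width r (V, E))"
proof -
  let ?P = "\<lambda>i. if i = 1 then (\<lambda>v. {v}) ` V else {V}"
  let ?R = "\<lambda>i::nat. if i = 1 then {} else offdiag V V"
  \<comment> \<open>The two-step sequence shows that the \<open>LEAST\<close> in \<open>merge_width\<close> is attained.\<close>
  have "width_le (V, E) 2 ?P ?R r (card V)"
    unfolding width_le_def fst_conv
  proof (intro ballI)
    fix i :: nat and v assume "i \<in> {2..2}"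
    then have "{X \<in> ?P (i - 1). dist_le (?R i) r v X} \<subseteq> (\<lambda>v. {v}) ` V" by auto
    then have "card {X \<in> ?P (i - 1). dist_le (?R i) r v X} \<le> card ((\<lambda>v. {v}) ` V)"
      using assms(1) by (intro card_mono) simp_all
    also have "\<dots> \<le> card V" using assms(1) by (rule card_image_le)
    finally show "card {X \<in> ?P (i - 1). dist_le (?R i) r v X} \<le> card V" .
  qed
  then have "\<exists>k m P R. merge_sequence (V, E) m P R \<and> width_le (V, E) m P R r k"
    using two_step_merge_sequence[OF assms(2)] by blast
  from LeastI_ex[OF this]
  have "\<exists>m P R. merge_sequence (V, E) m P R \<and> width_le (V, E) m P R r (merge_width r (V, E))"
    using assms(2) unfolding merge_width_def fst_conv by simp
  then show ?thesis using that by blast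
qed

definition degeneracy_bound :: "nat \<Rightarrow> nat \<Rightarrow> nat" where
  "degeneracy_bound k t = t + t * (k * (t - 1))"

definition fraternal_degeneracy_bound :: "nat \<Rightarrow> nat \<Rightarrow> nat \<Rightarrow> nat" where
  "fraternal_degeneracy_bound k t d = (t + t * (k * ((k + 1) * (t - 1)))) * d + t"

definition star_colour_bound :: "nat \<Rightarrow> nat \<Rightarrow> nat" where
  "star_colour_bound k t =
     (let d = degeneracy_bound k t in (fraternal_degeneracy_bound k t d + 1) * (d + d * d + 1))"

locale Ktt_free_merge_sequence =
  fixes V :: "'a set" and E :: "('a \<times> 'a) set" and m :: nat
    and P :: "nat \<Rightarrow> 'a set set" and R :: "nat \<Rightarrow> ('a \<times> 'a) set" and k t :: nat
  assumes graph: "fin_graph (V, E)"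
    and merge_seq: "merge_sequence (V, E) m P R"
    and width: "width_le (V, E) m P R 3 k"
    and Ktt_free: "\<not> contains_Ktt (V, E) t"
    and t_ge_2: "2 \<le> t"
begin

lemma finite_V: "finite V"
  using graph unfolding fin_graph_def by simp

lemma sym_E: "sym E"
  using graph unfolding fin_graph_def by simp

lemma merge_seq_conds:
  "1 \<le> m" "P 1 = {{v} | v. v \<in> V}" "P m = {V}"
  "\<forall>i\<in>{1..m}. partition_on V (P i)"
  "\<forall>i\<in>{2..m}. \<forall>Z\<in>P (i - 1). \<exists>X\<in>P i. Z \<subseteq> X"
  "\<forall>i\<in>{1..m}. \<forall>X\<in>P i. \<forall>Y\<in>P i. offdiag X Y - R i \<subseteq> E \<or> (offdiag X Y - R i) \<inter> E = {}"
  using merge_seq unfolding merge_sequence_def fst_conv snd_conv by simp_all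

lemma partition_P: "i \<in> {1..m} \<Longrightarrow> partition_on V (P i)"
  using merge_seq_conds(4) by simp

lemma part_subset: "i \<in> {1..m} \<Longrightarrow> X \<in> P i \<Longrightarrow> X \<subseteq> V"
  using partition_onD1[OF partition_P] by blast

lemma part_exists: "i \<in> {1..m} \<Longrightarrow> v \<in> V \<Longrightarrow> \<exists>X\<in>P i. v \<in> X"
  using partition_onD1[OF partition_P] by blast

lemma finite_parts: "i \<in> {1..m} \<Longrightarrow> finite (P i)"
  using partition_onD1[OF partition_P] finite_V by (metis finite_UnionD)

lemma refines: "i \<in> {2..m} \<Longrightarrow> Z \<in> P (i - 1) \<Longrightarrow> \<exists>X\<in>P i. Z \<subseteq> X"
  using merge_seq_conds(5) by simp

lemma homogeneous:
  "i \<in> {1..m} \<Longrightarrow> X \<in> P i \<Longrightarrow> Y \<in> P i \<Longrightarrow>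
    offdiag X Y - R i \<subseteq> E \<or> (offdiag X Y - R i) \<inter> E = {}"
  using merge_seq_conds(6) by simp

lemma edge_by_homogeneity:
  assumes "i \<in> {1..m}" "X \<in> P i" "a \<in> X" "w \<in> X" "b \<in> V" "a \<noteq> b"
    and "(w, b) \<in> E" "(w, b) \<notin> R i" "(a, b) \<notin> R i"
  shows "(a, b) \<in> E"
proof -
  obtain Y where Y: "Y \<in> P i" "b \<in> Y" using part_exists assms(1,5) by blast
  have "w \<noteq> b" using fin_graph_edgeD[OF graph assms(7)] by simp
  then have "(w, b) \<in> offdiag X Y - R i" "(a, b) \<in> offdiag X Y - R i"
    using assms(3,4,6,8,9) Y(2) unfolding offdiag_def by auto
  then show ?thesis using homogeneous[OF assms(1,2) Y(1)] assms(7) by blast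
qed

lemma complete_bipartite_small:
  assumes "A \<subseteq> V" "B \<subseteq> V" "\<forall>a\<in>A. \<forall>b\<in>B. (a, b) \<in> E"
  shows "card A < t \<or> card B < t"
proof (rule ccontr)
  assume "\<not> (card A < t \<or> card B < t)"
  then have "contains_Ktt (V, E) t"
    using contains_KttI[OF graph, of A B t] assms by simp
  then show False using Ktt_free by contradiction
qed

lemma nbhd_covered_by_few_parts:
  assumes "i \<in> {2..m}" "x \<in> V"
  obtains Zs where "Zs \<subseteq> P (i - 1)" "card Zs \<le> k" "V \<inter> nbhd (R i) 3 x \<subseteq> \<Union>Zs"
proof -
  define Zs where "Zs = {Z \<in> P (i - 1). dist_le (R i) 3 x Z}"
  have "card Zs \<le> k" using width assms unfolding width_le_def Zs_def fst_conv by blast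
  moreover have "V \<inter> nbhd (R i) 3 x \<subseteq> \<Union>Zs"
  proof
    fix u assume u: "u \<in> V \<inter> nbhd (R i) 3 x"
    have "i - 1 \<in> {1..m}" using assms(1) by auto
    then obtain Z where "Z \<in> P (i - 1)" "u \<in> Z" using part_exists u by blast
    then show "u \<in> \<Union>Zs" using u unfolding Zs_def dist_le_iff_nbhd by blast
  qed
  ultimately show ?thesis using that[of Zs] unfolding Zs_def by blast
qed

lemma nbhd_covered_by_few_coarse_parts:
  assumes "i \<in> {2..m}" "x \<in> V"
  obtains Qs where "Qs \<subseteq> P i" "card Qs \<le> k" "V \<inter> nbhd (R i) 3 x \<subseteq> \<Union>Qs"
proof -
  obtain Zs where Zs: "Zs \<subseteq> P (i - 1)" "card Zs \<le> k" "V \<inter> nbhd (R i) 3 x \<subseteq> \<Union>Zs"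
    using nbhd_covered_by_few_parts[OF assms] .
  obtain parent where parent: "\<forall>Z\<in>P (i - 1). parent Z \<in> P i \<and> Z \<subseteq> parent Z"
    using refines[OF assms(1)] by metis
  have "i - 1 \<in> {1..m}" using assms(1) by auto
  then have "finite Zs" using finite_subset[OF Zs(1) finite_parts] by blast
  then have "card (parent ` Zs) \<le> k" using card_image_le Zs(2) le_trans by blast
  moreover have "parent ` Zs \<subseteq> P i" using parent Zs(1) by blast
  moreover have "V \<inter> nbhd (R i) 3 x \<subseteq> \<Union>(parent ` Zs)" using Zs(1,3) parent by blast
  ultimately show ?thesis using that by blast
qed

lemma card_nbhd_inter_light:
  assumes "i \<in> {2..m}" "x \<in> V" "S \<subseteq> V" "\<forall>Z\<in>P (i - 1). card (Z \<inter> S) < t" "r \<le> 3"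
  shows "card (nbhd (R i) r x \<inter> S) \<le> k * (t - 1)"
proof -
  obtain Zs where Zs: "Zs \<subseteq> P (i - 1)" "card Zs \<le> k" "V \<inter> nbhd (R i) 3 x \<subseteq> \<Union>Zs"
    using nbhd_covered_by_few_parts[OF assms(1,2)] .
  have "i - 1 \<in> {1..m}" using assms(1) by auto
  then have "finite Zs" using finite_subset[OF Zs(1) finite_parts] by blast
  have "finite S" using finite_subset[OF assms(3) finite_V] .
  have "nbhd (R i) r x \<inter> S \<subseteq> (\<Union>Z\<in>Zs. Z \<inter> S)"
  proof
    fix u assume u: "u \<in> nbhd (R i) r x \<inter> S"
    then have "u \<in> V \<inter> nbhd (R i) 3 x" using nbhd_mono[OF assms(5), of "R i" x] assms(3) by blast
    then obtain Z where "Z \<in> Zs" "u \<in> Z" using Zs(3) by blast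
    then show "u \<in> (\<Union>Z\<in>Zs. Z \<inter> S)" using u by blast
  qed
  then have "card (nbhd (R i) r x \<inter> S) \<le> card (\<Union>Z\<in>Zs. Z \<inter> S)"
    using \<open>finite S\<close> by (intro card_mono) auto
  also have "\<dots> \<le> k * (t - 1)"
  proof (rule card_UN_le_mult[OF \<open>finite Zs\<close> Zs(2)])
    fix Z assume "Z \<in> Zs"
    then have "card (Z \<inter> S) < t" using Zs(1) assms(4) by blast
    then show "card (Z \<inter> S) \<le> t - 1" by simp
  qed
  finally show ?thesis .
qed

lemma first_heavy_step:
  assumes "S \<subseteq> V" "t \<le> card S"
  obtains i X where "i \<in> {2..m}" "X \<in> P i" "t \<le> card (X \<inter> S)"
    "\<forall>Z\<in>P (i - 1). card (Z \<inter> S) < t"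
proof -
  define heavy where "heavy i \<longleftrightarrow> 1 \<le> i \<and> (\<exists>X\<in>P i. t \<le> card (X \<inter> S))" for i
  have "heavy m" unfolding heavy_def using merge_seq_conds(1,3) assms by (simp add: Int_absorb1)
  have "\<not> heavy 1"
  proof
    assume "heavy 1"
    then obtain v where "t \<le> card ({v} \<inter> S)" unfolding heavy_def using merge_seq_conds(2) by auto
    moreover have "card ({v} \<inter> S) \<le> 1" by (cases "v \<in> S") auto
    ultimately show False using t_ge_2 by simp
  qed
  define i where "i = (LEAST i. heavy i)"
  have "heavy i" "i \<le> m" unfolding i_def using \<open>heavy m\<close> by (auto intro: LeastI Least_le)
  then have "2 \<le> i" using \<open>\<not> heavy 1\<close> unfolding heavy_def by (cases "i = 1") auto
  then have "\<not> heavy (i - 1)" unfolding i_def by (intro not_less_Least) (auto simp: i_def)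
  then have "\<forall>Z\<in>P (i - 1). card (Z \<inter> S) < t" using \<open>2 \<le> i\<close> unfolding heavy_def by auto
  moreover obtain X where "X \<in> P i" "t \<le> card (X \<inter> S)" using \<open>heavy i\<close> unfolding heavy_def by blast
  ultimately show ?thesis using \<open>i \<le> m\<close> \<open>2 \<le> i\<close> by (intro that[of i X]) auto
qed

lemma card_neighbours_of_heavy_part:
  assumes i: "i \<in> {1..m}" and X: "X \<in> P i" and X': "X' \<subseteq> X" "card X' = t" "x \<in> X'"
    and W: "W \<subseteq> V" "\<forall>w\<in>W. (x, w) \<in> E"
    and sparse: "\<forall>y\<in>X'. card (W \<inter> nbhd (R i) 1 y) \<le> b"
  shows "card W < t + t * b"
proof -
  define Near where "Near = (\<Union>y\<in>X'. W \<inter> nbhd (R i) 1 y)"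
  have "finite X'" using X'(2) t_ge_2 card.infinite by force
  have "finite W" using finite_subset[OF W(1) finite_V] .
  have "card Near \<le> t * b"
    unfolding Near_def using X'(2) sparse by (intro card_UN_le_mult[OF \<open>finite X'\<close>]) simp_all
  \<comment> \<open>For \<open>w \<notin> Near\<close> the pairs \<open>(x, w)\<close> and \<open>(a, w)\<close> avoid \<open>R i\<close> and join the same two
    parts, so homogeneity transfers the edge \<open>(x, w)\<close> to \<open>(a, w)\<close>.\<close>
  have "\<forall>a\<in>X'. \<forall>w\<in>W - Near. (a, w) \<in> E"
  proof (intro ballI)
    fix a w assume a: "a \<in> X'" and w: "w \<in> W - Near"
    have far: "w \<notin> nbhd (R i) 1 y" if "y \<in> X'" for y
      using w that unfolding Near_def by blast
    have not_R: "(y, w) \<notin> R i" if "y \<in> X'" for y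
      using far[OF that] nbhd_step[OF nbhd_refl[of y "R i" 0], of w] by auto
    have "a \<noteq> w" using far[OF a] nbhd_refl[of a "R i" 1] by blast
    moreover have "a \<in> X" "x \<in> X" "w \<in> V" "(x, w) \<in> E" using a X' w W by blast+
    ultimately show "(a, w) \<in> E"
      using edge_by_homogeneity[OF i X, of a x w] not_R[OF X'(3)] not_R[OF a] by blast
  qed
  moreover have "X' \<subseteq> V" using part_subset[OF i X] X'(1) by blast
  ultimately have "card (W - Near) < t"
    using complete_bipartite_small[of X' "W - Near"] W(1) X'(2) by blast
  moreover have "W \<inter> Near = Near" unfolding Near_def by blast
  then have "card W = card Near + card (W - Near)"
    using card_Int_Diff[OF \<open>finite W\<close>, of Near] by simp
  ultimately show ?thesis using \<open>card Near \<le> t * b\<close> by linarith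
qed

lemma degenerate_via_first_heavy_step:
  assumes "t \<le> d"
    and bound: "\<And>S i X X' x. S \<subseteq> V \<Longrightarrow> i \<in> {2..m} \<Longrightarrow> X \<in> P i \<Longrightarrow> X' \<subseteq> X \<inter> S \<Longrightarrow>
      card X' = t \<Longrightarrow> x \<in> X' \<Longrightarrow> \<forall>Z\<in>P (i - 1). card (Z \<inter> S) < t \<Longrightarrow>
      card {y\<in>S. y \<noteq> x \<and> ((x, y) \<in> H \<or> (y, x) \<in> H)} \<le> d"
  shows "degenerate V H d"
  unfolding degenerate_def
proof (intro allI impI)
  fix S assume S: "S \<subseteq> V" "S \<noteq> {}"
  show "\<exists>x\<in>S. card {y\<in>S. y \<noteq> x \<and> ((x, y) \<in> H \<or> (y, x) \<in> H)} \<le> d"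
  proof (cases "card S < t")
    case True
    obtain x where "x \<in> S" using S(2) by blast
    moreover have "card {y\<in>S. y \<noteq> x \<and> ((x, y) \<in> H \<or> (y, x) \<in> H)} \<le> card S"
      using finite_subset[OF S(1) finite_V] by (intro card_mono) auto
    ultimately show ?thesis using True assms(1) by (intro bexI[of _ x]) auto
  next
    case False
    then have "t \<le> card S" by simp
    then obtain i X where iX: "i \<in> {2..m}" "X \<in> P i" "t \<le> card (X \<inter> S)"
      and light: "\<forall>Z\<in>P (i - 1). card (Z \<inter> S) < t"
      by (rule first_heavy_step[OF S(1)])
    obtain X' where X': "X' \<subseteq> X \<inter> S" "card X' = t"
      using obtain_subset_with_card_n[OF iX(3)] by metis
    then have "X' \<noteq> {}" using t_ge_2 by auto
    then obtain x where "x \<in> X'" by blast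
    then show ?thesis
      using bound[OF S(1) iX(1,2) X' \<open>x \<in> X'\<close> light] X'(1) by blast
  qed
qed

lemma degenerate_graph: "degenerate V E (degeneracy_bound k t)"
proof (rule degenerate_via_first_heavy_step)
  show "t \<le> degeneracy_bound k t" unfolding degeneracy_bound_def by simp
next
  fix S i X X' x
  assume S: "S \<subseteq> V" and i: "i \<in> {2..m}" and X: "X \<in> P i" and X': "X' \<subseteq> X \<inter> S" "card X' = t"
    and x: "x \<in> X'" and light: "\<forall>Z\<in>P (i - 1). card (Z \<inter> S) < t"
  define W where "W = {y\<in>S. y \<noteq> x \<and> ((x, y) \<in> E \<or> (y, x) \<in> E)}"
  have "\<forall>w\<in>W. (x, w) \<in> E" using sym_E unfolding W_def by (auto dest: symD)
  moreover have "card (W \<inter> nbhd (R i) 1 y) \<le> k * (t - 1)" if "y \<in> X'" for y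
  proof -
    have "y \<in> V" using that X'(1) S by blast
    have "card (W \<inter> nbhd (R i) 1 y) \<le> card (nbhd (R i) 1 y \<inter> S)"
      using finite_subset[OF S finite_V] unfolding W_def by (intro card_mono) auto
    also have "\<dots> \<le> k * (t - 1)" by (rule card_nbhd_inter_light[OF i \<open>y \<in> V\<close> S light]) simp
    finally show ?thesis .
  qed
  moreover have "i \<in> {1..m}" "X' \<subseteq> X" "W \<subseteq> V" using i X'(1) S unfolding W_def by auto
  ultimately have "card W < t + t * (k * (t - 1))"
    using card_neighbours_of_heavy_part[OF _ X _ X'(2) x] by blast
  then show "card {y\<in>S. y \<noteq> x \<and> ((x, y) \<in> E \<or> (y, x) \<in> E)} \<le> degeneracy_bound k t"
    unfolding W_def degeneracy_bound_def by simp
qed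

lemma card_far_partners_lt:
  assumes i: "i \<in> {1..m}" and Q: "Q \<in> P i" and L: "L \<subseteq> Q \<inter> nbhd (R i) 1 x" "inj_on f L"
    and partner: "\<forall>w\<in>L. (w, f w) \<in> E \<and> f w \<notin> nbhd (R i) 2 x"
  shows "card L < t"
proof -
  have "L \<subseteq> V" using part_subset[OF i Q] L(1) by blast
  have "f ` L \<subseteq> V" using partner fin_graph_edgeD(2)[OF graph] by blast
  have far: "(y, f w) \<notin> R i" if "y \<in> L" "w \<in> L" for y w
  proof
    assume "(y, f w) \<in> R i"
    moreover have "y \<in> nbhd (R i) 1 x" using \<open>y \<in> L\<close> L(1) by blast
    ultimately have "f w \<in> nbhd (R i) (Suc 1) x" by (intro nbhd_step) auto
    then show False using partner \<open>w \<in> L\<close> by (simp add: numeral_2_eq_2)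
  qed
  have "\<forall>a\<in>L. \<forall>b\<in>f ` L. (a, b) \<in> E"
  proof (intro ballI)
    fix a b assume a: "a \<in> L" and b: "b \<in> f ` L"
    then obtain w where w: "w \<in> L" "b = f w" by blast
    have "a \<in> nbhd (R i) 2 x" using a L(1) nbhd_mono[of 1 2 "R i" x] by auto
    then have "a \<noteq> b" using partner w by auto
    moreover have "a \<in> Q" "w \<in> Q" "b \<in> V" "(w, b) \<in> E"
      using a w L(1) \<open>f ` L \<subseteq> V\<close> partner by auto
    ultimately show "(a, b) \<in> E"
      using edge_by_homogeneity[OF i Q, of a w b] far[OF w(1) w(1)] far[OF a w(1)] w(2) by blast
  qed
  then have "card L < t \<or> card (f ` L) < t"
    using complete_bipartite_small \<open>L \<subseteq> V\<close> \<open>f ` L \<subseteq> V\<close> by blast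
  then show ?thesis using card_image[OF L(2)] by simp
qed

lemma card_partners_in_nbhd:
  assumes i: "i \<in> {2..m}" and x: "x \<in> V" and S: "S \<subseteq> V"
    and light: "\<forall>Z\<in>P (i - 1). card (Z \<inter> S) < t"
    and W: "W \<subseteq> V" "inj_on f W" "f ` W \<subseteq> S" "\<forall>w\<in>W. (w, f w) \<in> E"
  shows "card (W \<inter> nbhd (R i) 1 x) \<le> k * ((k + 1) * (t - 1))"
proof -
  obtain Qs where Qs: "Qs \<subseteq> P i" "card Qs \<le> k" "V \<inter> nbhd (R i) 3 x \<subseteq> \<Union>Qs"
    using nbhd_covered_by_few_coarse_parts[OF i x] .
  have i1: "i \<in> {1..m}" using i by auto
  have "finite Qs" using finite_subset[OF Qs(1) finite_parts[OF i1]] .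
  have "finite W" using finite_subset[OF W(1) finite_V] .
  have "W \<inter> nbhd (R i) 1 x \<subseteq> (\<Union>Q\<in>Qs. W \<inter> nbhd (R i) 1 x \<inter> Q)"
  proof
    fix w assume w: "w \<in> W \<inter> nbhd (R i) 1 x"
    then have "w \<in> V \<inter> nbhd (R i) 3 x" using W(1) nbhd_mono[of 1 3 "R i" x] by auto
    then obtain Q where "Q \<in> Qs" "w \<in> Q" using Qs(3) by blast
    then show "w \<in> (\<Union>Q\<in>Qs. W \<inter> nbhd (R i) 1 x \<inter> Q)" using w by blast
  qed
  then have "card (W \<inter> nbhd (R i) 1 x) \<le> card (\<Union>Q\<in>Qs. W \<inter> nbhd (R i) 1 x \<inter> Q)"
    using \<open>finite W\<close> by (intro card_mono) auto
  also have "\<dots> \<le> k * ((k + 1) * (t - 1))"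
  proof (rule card_UN_le_mult[OF \<open>finite Qs\<close> Qs(2)])
    fix Q assume "Q \<in> Qs"
    define L where "L = W \<inter> nbhd (R i) 1 x \<inter> Q"
    define Near where "Near = {w\<in>L. f w \<in> nbhd (R i) 2 x}"
    have "finite L" using \<open>finite W\<close> unfolding L_def by simp
    have "card Near \<le> card (nbhd (R i) 2 x \<inter> S)"
    proof (rule card_inj_on_le)
      show "inj_on f Near" by (rule inj_on_subset[OF W(2)]) (auto simp: Near_def L_def)
      show "f ` Near \<subseteq> nbhd (R i) 2 x \<inter> S" using W(3) unfolding Near_def L_def by blast
      show "finite (nbhd (R i) 2 x \<inter> S)" using finite_subset[OF S finite_V] by simp
    qed
    also have "\<dots> \<le> k * (t - 1)" by (rule card_nbhd_inter_light[OF i x S light]) simp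
    finally have "card Near \<le> k * (t - 1)" .
    moreover have "card (L - Near) < t"
    proof (rule card_far_partners_lt[OF i1])
      show "Q \<in> P i" using \<open>Q \<in> Qs\<close> Qs(1) by blast
      show "L - Near \<subseteq> Q \<inter> nbhd (R i) 1 x" unfolding L_def by blast
      show "inj_on f (L - Near)" by (rule inj_on_subset[OF W(2)]) (auto simp: L_def)
      show "\<forall>w\<in>L - Near. (w, f w) \<in> E \<and> f w \<notin> nbhd (R i) 2 x"
        using W(4) unfolding L_def Near_def by blast
    qed
    moreover have "card L = card Near + card (L - Near)"
      using card_Int_Diff[OF \<open>finite L\<close>, of Near] unfolding Near_def by (simp add: Int_absorb1)
    ultimately show "card (W \<inter> nbhd (R i) 1 x \<inter> Q) \<le> (k + 1) * (t - 1)"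
      unfolding L_def by simp
  qed
  finally show ?thesis .
qed

lemma degenerate_fraternal:
  assumes D: "D \<subseteq> E" and out: "\<And>w. card {y. (w, y) \<in> D} \<le> d"
  shows "degenerate V (fraternal D) (fraternal_degeneracy_bound k t d)"
proof (rule degenerate_via_first_heavy_step)
  show "t \<le> fraternal_degeneracy_bound k t d" unfolding fraternal_degeneracy_bound_def by simp
next
  fix S i X X' x
  assume S: "S \<subseteq> V" and i: "i \<in> {2..m}" and X: "X \<in> P i" and X': "X' \<subseteq> X \<inter> S" "card X' = t"
    and x: "x \<in> X'" and light: "\<forall>Z\<in>P (i - 1). card (Z \<inter> S) < t"
  define N where "N = {y\<in>S. y \<noteq> x \<and> ((x, y) \<in> fraternal D \<or> (y, x) \<in> fraternal D)}"
  define b where "b = k * ((k + 1) * (t - 1))"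
  have out_fin: "finite {y. (w, y) \<in> D}" for w
    using finite_subset[OF _ finite_V, of "{y. (w, y) \<in> D}"] D fin_graph_edgeD(2)[OF graph] by blast
  have "finite N" using finite_subset[OF S finite_V] unfolding N_def by simp
  moreover have "N \<subseteq> {u. (x, u) \<in> fraternal D}" unfolding N_def fraternal_def by blast
  ultimately obtain W f where W: "W \<subseteq> {w. (w, x) \<in> D}" "inj_on f W" "f ` W \<subseteq> N"
    "\<And>w. w \<in> W \<Longrightarrow> (w, f w) \<in> D" and card_N: "card N \<le> card W * d"
    using fraternal_witnesses[OF _ _ out_fin out] by blast
  have "W \<subseteq> V" using W(1) D fin_graph_edgeD(1)[OF graph] by blast
  have "\<forall>w\<in>W. (x, w) \<in> E" using W(1) D sym_E by (auto dest: symD)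
  moreover have "card (W \<inter> nbhd (R i) 1 y) \<le> b" if "y \<in> X'" for y
  proof (unfold b_def, rule card_partners_in_nbhd[OF i _ S light \<open>W \<subseteq> V\<close> W(2)])
    show "y \<in> V" using that X'(1) S by blast
    show "f ` W \<subseteq> S" using W(3) unfolding N_def by blast
    show "\<forall>w\<in>W. (w, f w) \<in> E" using W(4) D by blast
  qed
  moreover have "i \<in> {1..m}" "X' \<subseteq> X" using i X'(1) by auto
  ultimately have "card W < t + t * b"
    using card_neighbours_of_heavy_part[OF _ X _ X'(2) x \<open>W \<subseteq> V\<close>] by blast
  then have "card N \<le> (t + t * b) * d" using card_N by (meson le_trans less_imp_le_nat mult_le_mono1)
  then show "card N \<le> fraternal_degeneracy_bound k t d"
    unfolding fraternal_degeneracy_bound_def b_def by simp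
qed

theorem star_coloring_exists:
  obtains col where "star_coloring (V, E) (star_colour_bound k t) col"
proof -
  let ?d0 = "degeneracy_bound k t"
  let ?d1 = "fraternal_degeneracy_bound k t ?d0"
  let ?d2 = "?d0 + ?d0 * ?d0"
  obtain D and rk :: "'a \<Rightarrow> nat" where D: "D \<subseteq> (E \<union> E\<inverse>) \<inter> (V \<times> V)"
    "\<And>a b. a \<in> V \<Longrightarrow> b \<in> V \<Longrightarrow> (a, b) \<in> E \<Longrightarrow> a \<noteq> b \<Longrightarrow> (a, b) \<in> D \<or> (b, a) \<in> D"
    "\<And>a b. (a, b) \<in> D \<Longrightarrow> rk b < rk a" "\<And>w. card {y. (w, y) \<in> D} \<le> ?d0"
    by (rule degenerate_orientation[OF finite_V degenerate_graph]) blast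
  have "D \<subseteq> E" using D(1) sym_E by (auto dest: symD)
  have orient: "(a, b) \<in> D \<or> (b, a) \<in> D" if "(a, b) \<in> E" for a b
    using D(2) fin_graph_edgeD[OF graph that] that by blast
  have out_fin: "finite {y. (w, y) \<in> D}" for w
    using finite_subset[OF _ finite_V, of "{y. (w, y) \<in> D}"] D(1) by blast
  obtain c1 where c1: "\<forall>v\<in>V. c1 v \<le> ?d1" "proper_on V (fraternal D) c1"
    by (rule degenerate_greedy_coloring[OF finite_V degenerate_fraternal[OF \<open>D \<subseteq> E\<close> D(4)]])
  have "degenerate V (D \<union> D O D) ?d2"
    by (rule degenerate_Un_relcomp[OF finite_V D(3) out_fin D(4)])
  then obtain c2 where c2: "\<forall>v\<in>V. c2 v \<le> ?d2" "proper_on V (D \<union> D O D) c2"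
    by (rule degenerate_greedy_coloring[OF finite_V])
  have c2_lt: "\<forall>v\<in>V. c2 v < ?d2 + 1" using c2(1) by (simp add: less_Suc_eq_le)
  define col where "col v = c1 v * (?d2 + 1) + c2 v" for v
  have "proper_on V (fraternal D \<union> (D \<union> D O D)) col"
    unfolding col_def by (rule proper_on_product_coloring[OF c1(2) c2(2) c2_lt])
  then have "proper_on V (D \<union> D O D \<union> fraternal D) col"
    by (simp add: Un_ac(3))
  moreover have "col v < star_colour_bound k t" if "v \<in> V" for v
  proof -
    have "c1 v * (?d2 + 1) \<le> ?d1 * (?d2 + 1)" using c1(1) that by (intro mult_le_mono1) simp
    moreover have "c2 v < ?d2 + 1" using c2_lt that by blast
    ultimately have "col v < ?d1 * (?d2 + 1) + (?d2 + 1)" unfolding col_def by linarith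
    then show ?thesis unfolding star_colour_bound_def Let_def by (simp add: algebra_simps)
  qed
  ultimately show ?thesis
    using star_coloring_if_proper_on_orientation_closure[OF graph _ \<open>D \<subseteq> E\<close> orient] that by blast
qed

end

theorem star_chromatic_number_le_star_colour_bound:
  assumes graph: "fin_graph (V, E)" and "\<not> contains_Ktt (V, E) t" "2 \<le> t"
    and "merge_width 3 (V, E) \<le> k"
  shows "star_chromatic_number (V, E) \<le> star_colour_bound k t"
proof (cases "V = {}")
  case True
  then have "E = {}" using graph unfolding fin_graph_def offdiag_def by auto
  then have "star_coloring (V, E) (star_colour_bound k t) (\<lambda>_. 0)"
    using True unfolding star_coloring_def star_forest_def by simp
  then show ?thesis by (rule star_chromatic_number_le)
next
  case False
  have "finite V" using graph unfolding fin_graph_def by simp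
  then obtain m P R where ms: "merge_sequence (V, E) m P R"
    and "width_le (V, E) m P R 3 (merge_width 3 (V, E))"
    by (rule merge_width_witness[OF _ False])
  then have "width_le (V, E) m P R 3 k" using assms(4) unfolding width_le_def by (meson le_trans)
  then interpret Ktt_free_merge_sequence V E m P R k t
    using graph ms assms(2,3) by unfold_locales
  obtain col where "star_coloring (V, E) (star_colour_bound k t) col"
    by (rule star_coloring_exists)
  then show ?thesis by (rule star_chromatic_number_le)
qed

theorem lemma7p5:
  fixes \<C> :: "('a set \<times> ('a \<times> 'a) set) set"
  assumes "\<forall>G\<in>\<C>. fin_graph G"
    and "weakly_sparse \<C>"
    and "\<exists>k. \<forall>G\<in>\<C>. merge_width 3 G \<le> k"
  shows "\<exists>c. \<forall>G\<in>\<C>. star_chromatic_number G \<le> c"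
proof -
  obtain t0 where t0: "\<forall>G\<in>\<C>. \<not> contains_Ktt G t0"
    using assms(2) unfolding weakly_sparse_def by blast
  obtain k where k: "\<forall>G\<in>\<C>. merge_width 3 G \<le> k" using assms(3) by blast
  define t where "t = max t0 2"
  have "star_chromatic_number (V, E) \<le> star_colour_bound k t" if "(V, E) \<in> \<C>" for V E
  proof (rule star_chromatic_number_le_star_colour_bound)
    show "fin_graph (V, E)" using assms(1) that by blast
    then show "\<not> contains_Ktt (V, E) t"
      using contains_Ktt_mono t0 that unfolding t_def by fastforce
    show "2 \<le> t" "merge_width 3 (V, E) \<le> k" using k that unfolding t_def by auto
  qed
  then show ?thesis by (metis prod.exhaust)
qed

end
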